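(* For $\tilde w\in\widetilde W$, $\Phi(G(\tilde w))=\varnothing$ if and only if $\tilde w\in\Omega$, in which case $G(\tilde w)=T$.
   Context: $k$ a finite field, $G=\mathrm{GL}_n$, $T$ the diagonal torus, $B$/$B^-$ the upper/lower triangular Borel. $I\subset\mathrm{GL}_n(k[[s]])$ is the preimage of $B$ under $s\mapsto0$; $I^-=\{g\in\mathrm{GL}_n(k[s^{-1}]):g|_{s^{-1}=0}\in B^-\}$. $\widetilde W$ is the group of monomial matrices $w\,\mathrm{diag}(s^{\lambda_1},\dots,s^{\lambda_n})$ with $w$ a permutation matrix and $\lambda\in\mathbb Z^n$; $\Omega=\{\tilde w\in\widetilde W:\tilde wI\tilde w^{-1}=I\}$. For $\tilde w\in\widetilde W$, $S(\tilde w)=I^-\cap\tilde wI\tilde w^{-1}$, and $G(\tilde w)=\mathrm{ev}_1(S(\tilde w))\subset\mathrm{GL}_n(k)$, where $\mathrm{ev}_1$ is evaluation at $s=1$. For a subgroup $H\subseteq\mathrm{GL}_n$, $\Phi(H)$ is the set of roots $\alpha$ of $\mathrm{GL}_n$ whose root subgroup $U_\alpha$ is contained in $H$. *)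

theory Defs
  imports "HOL-Computational_Algebra.Formal_Laurent_Series" "Jordan_Normal_Form.Matrix"
begin

(* Entries live in the field k((s)) of formal Laurent series, type 'k fls.
   Matrices are Jordan_Normal_Form matrices of dimension n x n, indices 0..<n. *)

definition is_power_series :: "'k::zero fls \<Rightarrow> bool" where
  "is_power_series f \<longleftrightarrow> (\<forall>i<0. fls_nth f i = 0)"

definition is_poly_sinv :: "'k::zero fls \<Rightarrow> bool" where
  "is_poly_sinv f \<longleftrightarrow> (\<forall>i>0. fls_nth f i = 0) \<and> finite {i. fls_nth f i \<noteq> 0}"

definition entries_in :: "nat \<Rightarrow> ('a \<Rightarrow> bool) \<Rightarrow> 'a mat \<Rightarrow> bool" where
  "entries_in n P A \<longleftrightarrow> (\<forall>i<n. \<forall>j<n. P (index_mat A (i,j)))"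

(* GL_n(R) for a subring R of a ring, R given by its membership predicate *)
definition GLn :: "nat \<Rightarrow> ('a::comm_ring_1 \<Rightarrow> bool) \<Rightarrow> 'a mat set" where
  "GLn n P = {A \<in> carrier_mat n n. entries_in n P A \<and>
      (\<exists>B \<in> carrier_mat n n. entries_in n P B \<and> A * B = 1\<^sub>m n \<and> B * A = 1\<^sub>m n)}"

(* Iwahori subgroup I: preimage of upper triangular B under s \<mapsto> 0 *)
definition Iwahori :: "nat \<Rightarrow> 'k::field fls mat set" where
  "Iwahori n = {g \<in> GLn n is_power_series.
      \<forall>i<n. \<forall>j<n. j < i \<longrightarrow> fls_nth (index_mat g (i,j)) 0 = 0}"

(* I^- : g in GL_n(k[s^{-1}]) with g|_{s^{-1}=0} lower triangular *)
definition Iwahori_minus :: "nat \<Rightarrow> 'k::field fls mat set" where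
  "Iwahori_minus n = {g \<in> GLn n is_poly_sinv.
      \<forall>i<n. \<forall>j<n. i < j \<longrightarrow> fls_nth (index_mat g (i,j)) 0 = 0}"

(* the monomial matrix w diag(s^{lambda_1},...,s^{lambda_n}), w the permutation matrix
   of sigma (w e_j = e_{sigma j}) *)
definition mono_mat :: "nat \<Rightarrow> (nat \<Rightarrow> nat) \<Rightarrow> (nat \<Rightarrow> int) \<Rightarrow> 'k::field fls mat" where
  "mono_mat n \<sigma> lam = mat n n (\<lambda>(i,j). if i = \<sigma> j then fls_X_intpow (lam j) else 0)"

definition affW :: "nat \<Rightarrow> 'k::field fls mat set" where
  "affW n = {mono_mat n \<sigma> lam | \<sigma> lam. \<sigma> permutes {0..<n}}"

definition mat_inv :: "nat \<Rightarrow> 'a::comm_ring_1 mat \<Rightarrow> 'a mat" where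
  "mat_inv n A = (THE B. B \<in> carrier_mat n n \<and> A * B = 1\<^sub>m n \<and> B * A = 1\<^sub>m n)"

definition conj_set :: "nat \<Rightarrow> 'a::comm_ring_1 mat \<Rightarrow> 'a mat set \<Rightarrow> 'a mat set" where
  "conj_set n w H = (\<lambda>g. w * g * mat_inv n w) ` H"

definition Omega :: "nat \<Rightarrow> 'k::field fls mat set" where
  "Omega n = {w \<in> affW n. conj_set n w (Iwahori n) = Iwahori n}"

definition S_set :: "nat \<Rightarrow> 'k::field fls mat \<Rightarrow> 'k fls mat set" where
  "S_set n w = Iwahori_minus n \<inter> conj_set n w (Iwahori n)"

(* evaluation at s = 1 of a Laurent polynomial *)
definition ev1 :: "'k::comm_ring_1 fls \<Rightarrow> 'k" where
  "ev1 f = (\<Sum>i\<in>{i. fls_nth f i \<noteq> 0}. fls_nth f i)"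

definition ev1_mat :: "'k::comm_ring_1 fls mat \<Rightarrow> 'k mat" where
  "ev1_mat A = map_mat ev1 A"

definition G_set :: "nat \<Rightarrow> 'k::field fls mat \<Rightarrow> 'k mat set" where
  "G_set n w = ev1_mat ` S_set n w"

definition root_subgroup :: "nat \<Rightarrow> nat \<times> nat \<Rightarrow> 'k::field mat set" where
  "root_subgroup n \<alpha> = {1\<^sub>m n + mat n n (\<lambda>(a,b). if (a,b) = \<alpha> then t else 0) | t. True}"

definition roots :: "nat \<Rightarrow> (nat \<times> nat) set" where
  "roots n = {(i,j). i < n \<and> j < n \<and> i \<noteq> j}"

definition Phi :: "nat \<Rightarrow> 'k::field mat set \<Rightarrow> (nat \<times> nat) set" where
  "Phi n H = {\<alpha> \<in> roots n. root_subgroup n \<alpha> \<subseteq> H}"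

definition torus :: "nat \<Rightarrow> 'k::field mat set" where
  "torus n = {A \<in> carrier_mat n n. diagonal_mat A \<and> (\<forall>i<n. index_mat A (i,i) \<noteq> 0)}"

end

theory Submission
  imports Defs
begin

(* Write w = sigma diag(s^lam). Conjugation by w moves the (i,j) entry of a matrix to position
   (sigma i, sigma j) and multiplies it by s^(lam i - lam j). The Iwahori subgroup I is the unit
   group of the order of matrices whose (i,j) entry has s-adic valuation at least [j < i], so w
   normalises I as soon as lam i - lam j + [j < i] = [sigma j < sigma i] for all i, j. Then
   S(w) = I^- Int I consists of invertible constant diagonal matrices, hence G(w) = T, and T
   contains no root subgroup. If the identity fails for some pair, then one of the defects of
   (i,j) and (j,i) is negative, as they sum to zero. A negative defect leaves room for an entry
   t s^e with e <= 0 at position (sigma i, sigma j) that is allowed both in I^- and in w I w^-1;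
   evaluating at s = 1 then puts the whole root subgroup U_(sigma i, sigma j) into G(w). *)

section \<open>Laurent series\<close>

definition vanishes_below :: "int \<Rightarrow> 'a::zero fls \<Rightarrow> bool" where
  "vanishes_below k f \<longleftrightarrow> (\<forall>m<k. fls_nth f m = 0)"

lemma fls_nth_monomial:
  "fls_nth (fls_const c * fls_X_intpow e :: 'a::comm_ring_1 fls) k = (if k = e then c else 0)"
  by (simp add: fls_X_intpow_times_conv_shift)

lemma fls_nth_X_intpow_sandwich:
  "fls_nth (fls_X_intpow a * f * fls_X_intpow b :: 'a::comm_ring_1 fls) k = fls_nth f (k - a - b)"
  by (simp add: fls_X_intpow_times_conv_shift algebra_simps)

lemma vanishes_below_X_intpow_sandwich:
  "vanishes_below k (fls_X_intpow a * f * fls_X_intpow b :: 'a::comm_ring_1 fls)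
     \<longleftrightarrow> vanishes_below (k - a - b) f"
  unfolding vanishes_below_def fls_nth_X_intpow_sandwich
proof safe
  fix m assume "\<forall>m<k. fls_nth f (m - a - b) = 0" "m < k - a - b"
  then show "fls_nth f m = 0" by (auto dest: spec[of _ "m + a + b"])
qed auto

lemma fls_X_intpow_sandwich_monomial:
  "fls_X_intpow a * (fls_const t * fls_X_intpow m) * fls_X_intpow b
    = (fls_const t * fls_X_intpow (a + m + b) :: 'a::comm_ring_1 fls)"
  by (rule fls_eqI) (simp add: fls_nth_X_intpow_sandwich fls_nth_monomial)

lemma vanishes_below_of_bool:
  "vanishes_below (of_bool b) f \<longleftrightarrow> is_power_series f \<and> (b \<longrightarrow> fls_nth f 0 = 0)"
proof -
  have "m < of_bool b \<longleftrightarrow> m < 0 \<or> (b \<and> m = 0)" for m :: int by (cases b) auto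
  then show ?thesis unfolding vanishes_below_def is_power_series_def by auto
qed

lemma is_poly_sinv_monomial:
  "e \<le> 0 \<Longrightarrow> is_poly_sinv (fls_const c * fls_X_intpow e :: 'a::comm_ring_1 fls)"
  unfolding is_poly_sinv_def fls_nth_monomial by (auto intro: finite_subset[of _ "{e}"])

lemma is_power_series_monomial:
  "0 \<le> e \<Longrightarrow> is_power_series (fls_const c * fls_X_intpow e :: 'a::comm_ring_1 fls)"
  unfolding is_power_series_def fls_nth_monomial by auto

lemma is_poly_sinv_const: "is_poly_sinv (fls_const c :: 'a::comm_ring_1 fls)"
  using is_poly_sinv_monomial[of 0 c] by simp

lemma is_power_series_const: "is_power_series (fls_const c :: 'a::comm_ring_1 fls)"
  using is_power_series_monomial[of 0 c] by simp

lemma power_series_poly_sinv_eq_const: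
  "is_power_series f \<Longrightarrow> is_poly_sinv f \<Longrightarrow> f = fls_const (fls_nth f 0)"
  unfolding is_poly_sinv_def is_power_series_def
  by (rule fls_eqI) (metis fls_const_nth linorder_neqE_linordered_idom)

lemma fls_nth_0_mult_power_series:
  assumes "is_power_series f" "is_power_series (g :: 'a::comm_ring_1 fls)"
  shows "fls_nth (f * g) 0 = fls_nth f 0 * fls_nth g 0"
proof -
  have "0 \<le> fls_subdegree f" "0 \<le> fls_subdegree g"
    using assms unfolding is_power_series_def by (auto intro: fls_subdegree_ge0I)
  then have "f * g = fps_to_fls (fls_regpart f * fls_regpart g)"
    by (simp add: fls_times_fps_to_fls)
  then show ?thesis by simp
qed

lemma ev1_monomial: "ev1 (fls_const c * fls_X_intpow e :: 'a::comm_ring_1 fls) = c"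
proof (cases "c = 0")
  case False
  then have "{i. fls_nth (fls_const c * fls_X_intpow e :: 'a fls) i \<noteq> 0} = {e}"
    by (auto simp: fls_nth_monomial)
  then show ?thesis by (simp add: ev1_def fls_nth_monomial)
qed (simp add: ev1_def)

lemma ev1_const: "ev1 (fls_const c :: 'a::comm_ring_1 fls) = c"
  using ev1_monomial[of c 0] by simp

lemma ev1_zero: "ev1 (0 :: 'a::comm_ring_1 fls) = 0"
  by (simp add: ev1_def)

lemma ev1_one: "ev1 (1 :: 'a::comm_ring_1 fls) = 1"
  using ev1_const[of "1 :: 'a"] by simp

section \<open>Matrices\<close>

lemma of_bool_less_add_of_bool_greater: "x \<noteq> y \<Longrightarrow> of_bool (x < y) + of_bool (y < x) = (1 :: int)"
  for x y :: nat
  by (cases x y rule: linorder_cases) auto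

lemma permutes_lessThan_in: "\<sigma> permutes {0..<n} \<Longrightarrow> i < n \<Longrightarrow> \<sigma> i < (n::nat)"
  by (simp add: permutes_in_image)

lemma permutes_eq_iff: "\<sigma> permutes S \<Longrightarrow> \<sigma> i = \<sigma> j \<longleftrightarrow> i = j"
  by (metis permutes_inj injD)

lemma permutes_lessThan_obtain:
  assumes "\<sigma> permutes {0..<n}" "q < (n::nat)"
  obtains i where "i < n" "q = \<sigma> i"
proof -
  have "inv_into UNIV \<sigma> q < n" using permutes_lessThan_in[OF permutes_inv[OF assms(1)] assms(2)] .
  moreover have "q = \<sigma> (inv_into UNIV \<sigma> q)" using assms(1) by (simp add: permutes_inverses)
  ultimately show ?thesis using that by blast
qed

lemma mat_inv_eqI:
  assumes A: "A \<in> carrier_mat n n" and B: "B \<in> carrier_mat n n"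
    and AB: "A * B = 1\<^sub>m n" and BA: "B * A = 1\<^sub>m n"
  shows "mat_inv n A = B"
  unfolding mat_inv_def
proof (rule the_equality)
  fix C assume "C \<in> carrier_mat n n \<and> A * C = 1\<^sub>m n \<and> C * A = 1\<^sub>m n"
  then have C: "C \<in> carrier_mat n n" and AC: "A * C = 1\<^sub>m n" by simp_all
  have "C = (B * A) * C" using BA C by simp
  also have "\<dots> = B * (A * C)" using A B C by (simp add: assoc_mult_mat)
  finally show "C = B" using AC B by simp
qed (use B AB BA in blast)

lemma conj_mult_conj:
  fixes w :: "'a::semiring_1 mat"
  assumes w: "w \<in> carrier_mat n n" and v: "v \<in> carrier_mat n n" and A: "A \<in> carrier_mat n n"
    and C: "C \<in> carrier_mat n n" and vw: "v * w = 1\<^sub>m n"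
  shows "(w * A * v) * (w * C * v) = w * (A * C) * v"
proof -
  have wA: "w * A \<in> carrier_mat n n" and Cv: "C * v \<in> carrier_mat n n"
    and AC: "A * C \<in> carrier_mat n n" and wCv: "w * C * v \<in> carrier_mat n n"
    using w v A C by (auto intro: mult_carrier_mat)
  have "v * (w * C * v) = v * (w * (C * v))" using assoc_mult_mat[OF w C v] by simp
  also have "\<dots> = (v * w) * (C * v)" using assoc_mult_mat[OF v w Cv] by simp
  also have "\<dots> = C * v" using vw left_mult_one_mat[OF Cv] by simp
  finally have cancel: "v * (w * C * v) = C * v" .
  have "(w * A * v) * (w * C * v) = (w * A) * (v * (w * C * v))"
    by (rule assoc_mult_mat[OF wA v wCv])
  also have "\<dots> = w * (A * (C * v))" unfolding cancel by (rule assoc_mult_mat[OF w A Cv])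
  also have "\<dots> = w * (A * C) * v" using assoc_mult_mat[OF A C v] assoc_mult_mat[OF w AC v] by simp
  finally show ?thesis .
qed

lemma conj_conj_cancel:
  fixes w :: "'a::semiring_1 mat"
  assumes w: "w \<in> carrier_mat n n" and v: "v \<in> carrier_mat n n" and h: "h \<in> carrier_mat n n"
    and wv: "w * v = 1\<^sub>m n"
  shows "w * (v * h * w) * v = h"
proof -
  have vh: "v * h \<in> carrier_mat n n" and vhw: "v * h * w \<in> carrier_mat n n"
    using w v h by (auto intro: mult_carrier_mat)
  have "w * (v * h * w) * v = w * ((v * h * w) * v)" by (rule assoc_mult_mat[OF w vhw v])
  also have "(v * h * w) * v = (v * h) * (w * v)" by (rule assoc_mult_mat[OF vh w v])
  also have "\<dots> = v * h" using wv right_mult_one_mat[OF vh] by simp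
  also have "w * (v * h) = (w * v) * h" by (rule assoc_mult_mat[OF w v h, symmetric])
  also have "\<dots> = h" using wv left_mult_one_mat[OF h] by simp
  finally show ?thesis .
qed

lemma upper_triangular_left_inverse:
  fixes A B :: "'a::comm_ring_1 mat"
  assumes A: "A \<in> carrier_mat n n" and B: "B \<in> carrier_mat n n"
    and BA: "B * A = 1\<^sub>m n" and A_ut: "upper_triangular A"
  shows "upper_triangular B"
proof -
  have "\<forall>i<n. j < i \<longrightarrow> B $$ (i,j) = 0" if "j < n" for j
    using that
  proof (induction j rule: less_induct)
    case (less j)
    have A_lower: "A $$ (k,j) = 0" if "j < k" "k < n" for k
      using upper_triangularD[OF A_ut that(1)] A that(2) by simp
    have BA_entry: "(B * A) $$ (i,j) = B $$ (i,j) * A $$ (j,j)" if i: "i < n" "j \<le> i" for i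
    proof -
      have "(B * A) $$ (i,j) = (\<Sum>k\<in>{0..<n}. B $$ (i,k) * A $$ (k,j))"
        using A B i less.prems by (simp add: scalar_prod_def)
      also have "\<dots> = (\<Sum>k\<in>{0..<n}. if k = j then B $$ (i,j) * A $$ (j,j) else 0)"
      proof (rule sum.cong)
        fix k assume "k \<in> {0..<n}"
        then show "B $$ (i,k) * A $$ (k,j) = (if k = j then B $$ (i,j) * A $$ (j,j) else 0)"
          using less.IH[of k] i A_lower by (cases k j rule: linorder_cases) auto
      qed simp
      also have "\<dots> = B $$ (i,j) * A $$ (j,j)" using less.prems by simp
      finally show ?thesis .
    qed
    have "B $$ (j,j) * A $$ (j,j) = 1" using BA_entry[of j] BA less.prems by simp
    show ?case
    proof (intro allI impI)
      fix i assume "i < n" "j < i"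
      then have "B $$ (i,j) * A $$ (j,j) = 0" using BA_entry[of i] BA less.prems by simp
      then have "B $$ (i,j) * (A $$ (j,j) * B $$ (j,j)) = 0" by (simp add: mult.assoc[symmetric])
      then show "B $$ (i,j) = 0" using \<open>B $$ (j,j) * A $$ (j,j) = 1\<close> by (simp add: mult.commute)
    qed
  qed
  then show ?thesis using B by (intro upper_triangularI) auto
qed

section \<open>Monomial matrices\<close>

lemma mono_mat_carrier [simp]: "mono_mat n \<sigma> lam \<in> carrier_mat n n"
  by (simp add: mono_mat_def)

lemma mono_mat_dim [simp]: "dim_row (mono_mat n \<sigma> lam) = n" "dim_col (mono_mat n \<sigma> lam) = n"
  by (simp_all add: mono_mat_def)

lemma mono_mat_index:
  "i < n \<Longrightarrow> j < n \<Longrightarrow> mono_mat n \<sigma> lam $$ (i,j) = (if i = \<sigma> j then fls_X_intpow (lam j) else 0)"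
  by (simp add: mono_mat_def)

lemma mono_mat_mult_index:
  assumes \<sigma>: "\<sigma> permutes {0..<n}" and g: "g \<in> carrier_mat n m" and i: "i < n" and c: "c < m"
  shows "(mono_mat n \<sigma> lam * g) $$ (\<sigma> i, c) = fls_X_intpow (lam i) * g $$ (i,c)"
proof -
  have "(mono_mat n \<sigma> lam * g) $$ (\<sigma> i, c)
      = (\<Sum>k\<in>{0..<n}. (if i = k then fls_X_intpow (lam k) else 0) * g $$ (k,c))"
    using g c permutes_lessThan_in[OF \<sigma> i]
    by (simp add: scalar_prod_def mono_mat_index permutes_eq_iff[OF \<sigma>])
  also have "\<dots> = (\<Sum>k\<in>{0..<n}. if k = i then fls_X_intpow (lam i) * g $$ (i,c) else 0)"
    by (rule sum.cong) auto
  also have "\<dots> = fls_X_intpow (lam i) * g $$ (i,c)"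
    using i by simp
  finally show ?thesis .
qed

lemma mult_mono_mat_index:
  assumes \<tau>: "\<tau> permutes {0..<n}" and M: "M \<in> carrier_mat m n" and r: "r < m" and q: "q < n"
  shows "(M * mono_mat n \<tau> nu) $$ (r, q) = M $$ (r, \<tau> q) * fls_X_intpow (nu q)"
proof -
  have "(M * mono_mat n \<tau> nu) $$ (r, q)
      = (\<Sum>k\<in>{0..<n}. M $$ (r,k) * (if k = \<tau> q then fls_X_intpow (nu q) else 0))"
    using M r q by (simp add: scalar_prod_def mono_mat_index)
  also have "\<dots> = (\<Sum>k\<in>{0..<n}. if k = \<tau> q then M $$ (r, \<tau> q) * fls_X_intpow (nu q) else 0)"
    by (rule sum.cong) auto
  also have "\<dots> = M $$ (r, \<tau> q) * fls_X_intpow (nu q)"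
    using permutes_lessThan_in[OF \<tau> q] by simp
  finally show ?thesis .
qed

definition inverse_exponents :: "(nat \<Rightarrow> nat) \<Rightarrow> (nat \<Rightarrow> int) \<Rightarrow> nat \<Rightarrow> int" where
  "inverse_exponents \<sigma> lam q = - lam (inv_into UNIV \<sigma> q)"

abbreviation mono_mat_inv :: "nat \<Rightarrow> (nat \<Rightarrow> nat) \<Rightarrow> (nat \<Rightarrow> int) \<Rightarrow> 'a::field fls mat" where
  "mono_mat_inv n \<sigma> lam \<equiv> mono_mat n (inv_into UNIV \<sigma>) (inverse_exponents \<sigma> lam)"

lemma inverse_exponents_involutive:
  assumes "\<sigma> permutes {0..<n}"
  shows "inverse_exponents (inv_into UNIV \<sigma>) (inverse_exponents \<sigma> lam) = lam"
  using assms
  by (simp add: inverse_exponents_def inv_inv_eq permutes_bij permutes_inverses fun_eq_iff)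

lemma mono_mat_conj_index:
  assumes \<sigma>: "\<sigma> permutes {0..<n}" and g: "g \<in> carrier_mat n n" and i: "i < n" and j: "j < n"
  shows "(mono_mat n \<sigma> lam * g * mono_mat_inv n \<sigma> lam) $$ (\<sigma> i, \<sigma> j)
     = fls_X_intpow (lam i) * g $$ (i,j) * fls_X_intpow (- lam j)"
proof -
  have wg: "mono_mat n \<sigma> lam * g \<in> carrier_mat n n" using mult_carrier_mat[OF mono_mat_carrier g] .
  have "(mono_mat n \<sigma> lam * g * mono_mat_inv n \<sigma> lam) $$ (\<sigma> i, \<sigma> j)
      = (mono_mat n \<sigma> lam * g) $$ (\<sigma> i, inv_into UNIV \<sigma> (\<sigma> j))
        * fls_X_intpow (inverse_exponents \<sigma> lam (\<sigma> j))"
    using permutes_lessThan_in[OF \<sigma>] i j by (intro mult_mono_mat_index[OF permutes_inv[OF \<sigma>] wg])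
  also have "\<dots> = (mono_mat n \<sigma> lam * g) $$ (\<sigma> i, j) * fls_X_intpow (- lam j)"
    using \<sigma> by (simp add: permutes_inverses inverse_exponents_def)
  also have "\<dots> = fls_X_intpow (lam i) * g $$ (i,j) * fls_X_intpow (- lam j)"
    using mono_mat_mult_index[OF \<sigma> g i j] by simp
  finally show ?thesis .
qed

lemma mono_mat_right_inverse:
  assumes \<sigma>: "\<sigma> permutes {0..<n}"
  shows "mono_mat n \<sigma> lam * mono_mat_inv n \<sigma> lam = (1\<^sub>m n :: 'a::field fls mat)"
proof (rule eq_matI)
  fix p q assume "p < dim_row (1\<^sub>m n :: 'a fls mat)" "q < dim_col (1\<^sub>m n :: 'a fls mat)"
  then obtain i j where ij: "i < n" "j < n" "p = \<sigma> i" "q = \<sigma> j"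
    using permutes_lessThan_obtain[OF \<sigma>] by (metis index_one_mat(2,3))
  have "(mono_mat n \<sigma> lam * mono_mat_inv n \<sigma> lam) $$ (p, q)
      = fls_X_intpow (lam i) * 1\<^sub>m n $$ (i,j) * fls_X_intpow (- lam j)"
    using mono_mat_conj_index[OF \<sigma> one_carrier_mat ij(1,2), of lam]
    unfolding right_mult_one_mat[OF mono_mat_carrier] ij(3,4) .
  also have "\<dots> = 1\<^sub>m n $$ (p, q)"
    using ij permutes_lessThan_in[OF \<sigma>]
    by (simp add: permutes_eq_iff[OF \<sigma>] fls_X_intpow_times_conv_shift)
  finally show "(mono_mat n \<sigma> lam * mono_mat_inv n \<sigma> lam) $$ (p, q)
      = 1\<^sub>m n $$ (p, q)" .
qed simp_all

lemma mono_mat_left_inverse: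
  assumes \<sigma>: "\<sigma> permutes {0..<n}"
  shows "mono_mat_inv n \<sigma> lam * mono_mat n \<sigma> lam = (1\<^sub>m n :: 'a::field fls mat)"
  using mono_mat_right_inverse[OF permutes_inv[OF \<sigma>], of "inverse_exponents \<sigma> lam"] \<sigma>
  by (simp add: inverse_exponents_involutive inv_inv_eq permutes_bij)

lemma mat_inv_mono_mat:
  assumes \<sigma>: "\<sigma> permutes {0..<n}"
  shows "mat_inv n (mono_mat n \<sigma> lam)
    = (mono_mat_inv n \<sigma> lam :: 'a::field fls mat)"
  using mono_mat_right_inverse[OF \<sigma>] mono_mat_left_inverse[OF \<sigma>] by (intro mat_inv_eqI) simp_all

section \<open>The Iwahori order and its normaliser\<close>

definition const_term_mat :: "'a::zero fls mat \<Rightarrow> 'a mat" where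
  "const_term_mat A = map_mat (\<lambda>f. fls_nth f 0) A"

lemma const_term_mat_carrier [simp]: "const_term_mat A \<in> carrier_mat n m \<longleftrightarrow> A \<in> carrier_mat n m"
  by (simp add: const_term_mat_def)

lemma const_term_mat_one [simp]: "const_term_mat (1\<^sub>m n :: 'a::zero_neq_one fls mat) = 1\<^sub>m n"
  by (rule eq_matI) (auto simp: const_term_mat_def)

lemma const_term_mat_mult:
  fixes A B :: "'a::comm_ring_1 fls mat"
  assumes A: "A \<in> carrier_mat n n" "entries_in n is_power_series A"
    and B: "B \<in> carrier_mat n n" "entries_in n is_power_series B"
  shows "const_term_mat (A * B) = const_term_mat A * const_term_mat B"
proof (rule eq_matI)
  fix i j assume "i < dim_row (const_term_mat A * const_term_mat B)"
    "j < dim_col (const_term_mat A * const_term_mat B)"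
  then have ij: "i < n" "j < n" using A B by (simp_all add: const_term_mat_def)
  have "fls_nth (\<Sum>k\<in>{0..<n}. A $$ (i,k) * B $$ (k,j)) 0
      = (\<Sum>k\<in>{0..<n}. fls_nth (A $$ (i,k)) 0 * fls_nth (B $$ (k,j)) 0)"
    unfolding fls_nth_sum using A(2) B(2) ij
    by (intro sum.cong refl fls_nth_0_mult_power_series) (auto simp: entries_in_def)
  then show "const_term_mat (A * B) $$ (i,j) = (const_term_mat A * const_term_mat B) $$ (i,j)"
    using A(1) B(1) ij by (simp add: const_term_mat_def scalar_prod_def)
qed (use A B in \<open>simp_all add: const_term_mat_def\<close>)

definition iwahori_order :: "nat \<Rightarrow> 'a::zero fls mat \<Rightarrow> bool" where
  "iwahori_order n g \<longleftrightarrow> g \<in> carrier_mat n n \<and>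
     (\<forall>i<n. \<forall>j<n. vanishes_below (of_bool (j < i)) (g $$ (i,j)))"

lemma iwahori_order_iff:
  "iwahori_order n g \<longleftrightarrow> g \<in> carrier_mat n n \<and> entries_in n is_power_series g \<and>
     upper_triangular (const_term_mat g)"
  by (auto simp: iwahori_order_def vanishes_below_of_bool entries_in_def upper_triangular_def
      const_term_mat_def)

lemma Iwahori_iff_upper_triangular:
  "g \<in> Iwahori n \<longleftrightarrow> g \<in> GLn n is_power_series \<and> upper_triangular (const_term_mat g)"
  by (auto simp: Iwahori_def GLn_def upper_triangular_def const_term_mat_def)

lemma Iwahori_iff_unit_of_iwahori_order:
  fixes g :: "'a::field fls mat"
  shows "g \<in> Iwahori n \<longleftrightarrow>
    (\<exists>B. iwahori_order n g \<and> iwahori_order n B \<and> g * B = 1\<^sub>m n \<and> B * g = 1\<^sub>m n)"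
proof
  assume "g \<in> Iwahori n"
  then obtain B where g: "g \<in> carrier_mat n n" "entries_in n is_power_series g"
      "upper_triangular (const_term_mat g)"
    and B: "B \<in> carrier_mat n n" "entries_in n is_power_series B"
    and gB: "g * B = 1\<^sub>m n" and Bg: "B * g = 1\<^sub>m n"
    unfolding Iwahori_iff_upper_triangular GLn_def by blast
  have const_Bg: "const_term_mat B * const_term_mat g = 1\<^sub>m n"
    using const_term_mat_mult[OF B g(1,2)] Bg by simp
  have "upper_triangular (const_term_mat B)"
    by (rule upper_triangular_left_inverse[OF _ _ const_Bg g(3)]) (simp_all add: g(1) B(1))
  then show "\<exists>B. iwahori_order n g \<and> iwahori_order n B \<and> g * B = 1\<^sub>m n \<and> B * g = 1\<^sub>m n"
    using g B gB Bg unfolding iwahori_order_iff by blast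
next
  assume "\<exists>B. iwahori_order n g \<and> iwahori_order n B \<and> g * B = 1\<^sub>m n \<and> B * g = 1\<^sub>m n"
  then show "g \<in> Iwahori n"
    unfolding Iwahori_iff_upper_triangular GLn_def iwahori_order_iff by blast
qed

(* Conjugation by mono_mat n sigma lam carries the valuation bounds of the Iwahori order
   exactly onto each other. *)
definition preserves_iwahori_bounds :: "nat \<Rightarrow> (nat \<Rightarrow> nat) \<Rightarrow> (nat \<Rightarrow> int) \<Rightarrow> bool" where
  "preserves_iwahori_bounds n \<sigma> lam \<longleftrightarrow>
     (\<forall>i<n. \<forall>j<n. lam i - lam j + of_bool (j < i) = of_bool (\<sigma> j < \<sigma> i))"

lemma preserves_iwahori_bounds_inverse:
  assumes \<sigma>: "\<sigma> permutes {0..<n}" and bounds: "preserves_iwahori_bounds n \<sigma> lam"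
  shows "preserves_iwahori_bounds n (inv_into UNIV \<sigma>) (inverse_exponents \<sigma> lam)"
  unfolding preserves_iwahori_bounds_def
proof (intro allI impI)
  fix p q assume "p < n" "q < n"
  then obtain i j where ij: "i < n" "j < n" "p = \<sigma> i" "q = \<sigma> j"
    using permutes_lessThan_obtain[OF \<sigma>] by metis
  have "lam i - lam j + of_bool (j < i) = of_bool (\<sigma> j < \<sigma> i)"
    using bounds ij(1,2) unfolding preserves_iwahori_bounds_def by blast
  then show "inverse_exponents \<sigma> lam p - inverse_exponents \<sigma> lam q + of_bool (q < p)
      = of_bool (inv_into UNIV \<sigma> q < inv_into UNIV \<sigma> p)"
    unfolding ij(3,4) inverse_exponents_def permutes_inverses(2)[OF \<sigma>] by linarith
qed

lemma iwahori_order_mono_mat_conj: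
  assumes \<sigma>: "\<sigma> permutes {0..<n}" and bounds: "preserves_iwahori_bounds n \<sigma> lam"
    and g: "iwahori_order n (g :: 'a::field fls mat)"
  shows "iwahori_order n (mono_mat n \<sigma> lam * g * mono_mat_inv n \<sigma> lam)"
  unfolding iwahori_order_def
proof (intro conjI allI impI)
  have gc: "g \<in> carrier_mat n n" using g unfolding iwahori_order_def by simp
  show "mono_mat n \<sigma> lam * g * mono_mat_inv n \<sigma> lam \<in> carrier_mat n n"
    using mult_carrier_mat[OF mult_carrier_mat[OF mono_mat_carrier gc] mono_mat_carrier] .
  fix p q assume "p < n" "q < n"
  then obtain i j where ij: "i < n" "j < n" "p = \<sigma> i" "q = \<sigma> j"
    using permutes_lessThan_obtain[OF \<sigma>] by metis
  have entry: "vanishes_below (of_bool (j < i)) (g $$ (i,j))"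
    using g ij unfolding iwahori_order_def by simp
  have "lam i - lam j + of_bool (j < i) = of_bool (\<sigma> j < \<sigma> i)"
    using bounds ij(1,2) unfolding preserves_iwahori_bounds_def by blast
  then have shift: "of_bool (\<sigma> j < \<sigma> i) - lam i - - lam j = (of_bool (j < i) :: int)"
    by linarith
  show "vanishes_below (of_bool (q < p))
      ((mono_mat n \<sigma> lam * g * mono_mat_inv n \<sigma> lam) $$ (p, q))"
    unfolding ij(3,4) mono_mat_conj_index[OF \<sigma> gc ij(1,2)] vanishes_below_X_intpow_sandwich shift
    by (rule entry)
qed

lemma mono_mat_conj_in_Iwahori:
  assumes \<sigma>: "\<sigma> permutes {0..<n}" and bounds: "preserves_iwahori_bounds n \<sigma> lam"
    and g: "g \<in> Iwahori n"
  shows "mono_mat n \<sigma> lam * g * mono_mat_inv n \<sigma> lam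
    \<in> (Iwahori n :: 'a::field fls mat set)"
proof -
  let ?w = "mono_mat n \<sigma> lam :: 'a fls mat"
  let ?v = "mono_mat_inv n \<sigma> lam :: 'a fls mat"
  obtain B where gI: "iwahori_order n g" and BI: "iwahori_order n B"
    and gB: "g * B = 1\<^sub>m n" and Bg: "B * g = 1\<^sub>m n"
    using g unfolding Iwahori_iff_unit_of_iwahori_order by blast
  have carr: "g \<in> carrier_mat n n" "B \<in> carrier_mat n n"
    using gI BI unfolding iwahori_order_def by simp_all
  have vw: "?v * ?w = 1\<^sub>m n" by (rule mono_mat_left_inverse[OF \<sigma>])
  have wv: "?w * ?v = 1\<^sub>m n" by (rule mono_mat_right_inverse[OF \<sigma>])
  have "(?w * g * ?v) * (?w * B * ?v) = 1\<^sub>m n" "(?w * B * ?v) * (?w * g * ?v) = 1\<^sub>m n"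
    using conj_mult_conj[OF mono_mat_carrier mono_mat_carrier carr vw]
      conj_mult_conj[OF mono_mat_carrier mono_mat_carrier carr(2,1) vw] gB Bg wv
    by simp_all
  then show ?thesis
    unfolding Iwahori_iff_unit_of_iwahori_order
    using iwahori_order_mono_mat_conj[OF \<sigma> bounds gI] iwahori_order_mono_mat_conj[OF \<sigma> bounds BI]
    by blast
qed

lemma conj_set_mono_mat_Iwahori:
  assumes \<sigma>: "\<sigma> permutes {0..<n}" and bounds: "preserves_iwahori_bounds n \<sigma> lam"
  shows "conj_set n (mono_mat n \<sigma> lam) (Iwahori n) = (Iwahori n :: 'a::field fls mat set)"
  unfolding conj_set_def mat_inv_mono_mat[OF \<sigma>]
proof (intro subset_antisym subsetI)
  fix h :: "'a fls mat" assume h: "h \<in> Iwahori n"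
  let ?w = "mono_mat n \<sigma> lam :: 'a fls mat"
  let ?v = "mono_mat_inv n \<sigma> lam :: 'a fls mat"
  have "?v * h * mono_mat_inv n (inv_into UNIV \<sigma>) (inverse_exponents \<sigma> lam) \<in> Iwahori n"
    using permutes_inv[OF \<sigma>] preserves_iwahori_bounds_inverse[OF \<sigma> bounds] h
    by (rule mono_mat_conj_in_Iwahori)
  then have "?v * h * ?w \<in> Iwahori n"
    using \<sigma> by (simp add: inverse_exponents_involutive inv_inv_eq permutes_bij)
  moreover have "h \<in> carrier_mat n n"
    using h unfolding Iwahori_def GLn_def by simp
  then have "?w * (?v * h * ?w) * ?v = h"
    using mono_mat_right_inverse[OF \<sigma>] by (intro conj_conj_cancel) simp_all
  ultimately show "h \<in> (\<lambda>g. ?w * g * ?v) ` Iwahori n" by (metis image_eqI)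
qed (use mono_mat_conj_in_Iwahori[OF \<sigma> bounds] in blast)

section \<open>Root subgroups and the torus\<close>

definition transvection :: "nat \<Rightarrow> nat \<Rightarrow> nat \<Rightarrow> 'a::comm_ring_1 \<Rightarrow> 'a mat" where
  "transvection n a b c = 1\<^sub>m n + mat n n (\<lambda>(p,q). if (p,q) = (a,b) then c else 0)"

lemma transvection_carrier [simp]: "transvection n a b c \<in> carrier_mat n n"
  and transvection_dim [simp]:
    "dim_row (transvection n a b c) = n" "dim_col (transvection n a b c) = n"
  by (simp_all add: transvection_def)

lemma transvection_index:
  "a \<noteq> b \<Longrightarrow> p < n \<Longrightarrow> q < n \<Longrightarrow>
    transvection n a b c $$ (p,q) = (if p = q then 1 else if (p,q) = (a,b) then c else 0)"
  by (auto simp: transvection_def)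

lemma root_subgroup_eq_range_transvection: "root_subgroup n (a,b) = range (transvection n a b)"
  unfolding root_subgroup_def transvection_def by auto

lemma transvection_add:
  assumes ab: "a \<noteq> b" and b: "b < n"
  shows "transvection n a b c * transvection n a b d = transvection n a b (c + d)"
proof (rule eq_matI)
  fix p q
  assume "p < dim_row (transvection n a b (c + d))" "q < dim_col (transvection n a b (c + d))"
  then have p: "p < n" and q: "q < n" by simp_all
  have "(transvection n a b c * transvection n a b d) $$ (p,q)
      = (\<Sum>k\<in>{0..<n}. (if k = p then transvection n a b d $$ (k,q) else 0)
          + (if k = b then (if p = a then c else 0) * transvection n a b d $$ (k,q) else 0))"
    using ab p q by (auto simp: scalar_prod_def transvection_index intro: sum.cong)
  also have "\<dots> = transvection n a b (c + d) $$ (p,q)"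
    using ab p q b by (auto simp: sum.distrib transvection_index)
  finally show "(transvection n a b c * transvection n a b d) $$ (p,q)
      = transvection n a b (c + d) $$ (p,q)" .
qed simp_all

lemma transvection_zero: "transvection n a b 0 = 1\<^sub>m n"
  by (rule eq_matI) (auto simp: transvection_def)

lemma transvection_in_GLn:
  assumes ab: "a \<noteq> b" and b: "b < n" and P: "P 0" "P 1" "P c" "P (- c)"
  shows "transvection n a b c \<in> GLn n P"
proof -
  have "entries_in n P (transvection n a b x)" if "P x" for x
    unfolding entries_in_def using that P ab by (auto simp: transvection_index)
  moreover have "transvection n a b c * transvection n a b (- c) = 1\<^sub>m n"
    "transvection n a b (- c) * transvection n a b c = 1\<^sub>m n"
    using transvection_add[OF ab b, of c "- c"] transvection_add[OF ab b, of "- c" c]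
    by (simp_all add: transvection_zero)
  ultimately show ?thesis
    unfolding GLn_def using P(3,4) transvection_carrier by blast
qed

lemma transvection_monomial_in_GLn:
  assumes "a \<noteq> b" "b < n" "\<And>c. P (fls_const c)" "\<And>c. P (fls_const c * fls_X_intpow e)"
  shows "transvection n a b (fls_const t * fls_X_intpow e :: 'a::comm_ring_1 fls) \<in> GLn n P"
proof (rule transvection_in_GLn[OF assms(1,2)])
  show "P 0" using assms(3)[of 0] by simp
  show "P 1" using assms(3)[of 1] by simp
  show "P (fls_const t * fls_X_intpow e)" by (rule assms(4))
  show "P (- (fls_const t * fls_X_intpow e))" using assms(4)[of "- t"] by simp
qed

lemma transvection_monomial_in_Iwahori_minus:
  assumes ab: "a \<noteq> b" and b: "b < n" and e: "e \<le> - of_bool (a < b)"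
  shows "transvection n a b (fls_const t * fls_X_intpow e)
    \<in> (Iwahori_minus n :: 'a::field fls mat set)"
  unfolding Iwahori_minus_def
proof (intro CollectI conjI allI impI)
  show "transvection n a b (fls_const t * fls_X_intpow e) \<in> GLn n is_poly_sinv"
    by (intro transvection_monomial_in_GLn[OF ab b] is_poly_sinv_const is_poly_sinv_monomial)
      (use e in \<open>(cases "a < b"; simp)\<close>)
  fix p q assume "p < n" "q < n" "p < q"
  then show "fls_nth (transvection n a b (fls_const t * fls_X_intpow e) $$ (p, q)) 0 = 0"
    using ab e by (auto simp: transvection_index fls_nth_monomial)
qed

lemma transvection_monomial_in_Iwahori:
  assumes ab: "a \<noteq> b" and b: "b < n" and e: "of_bool (b < a) \<le> e"
  shows "transvection n a b (fls_const t * fls_X_intpow e) \<in> (Iwahori n :: 'a::field fls mat set)"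
  unfolding Iwahori_def
proof (intro CollectI conjI allI impI)
  show "transvection n a b (fls_const t * fls_X_intpow e) \<in> GLn n is_power_series"
    by (intro transvection_monomial_in_GLn[OF ab b] is_power_series_const is_power_series_monomial)
      (use e in \<open>simp add: order_trans[OF zero_less_eq_of_bool]\<close>)
  fix p q assume "p < n" "q < n" "q < p"
  then show "fls_nth (transvection n a b (fls_const t * fls_X_intpow e) $$ (p, q)) 0 = 0"
    using ab e by (auto simp: transvection_index fls_nth_monomial)
qed

lemma mono_mat_conj_transvection:
  assumes \<sigma>: "\<sigma> permutes {0..<n}" and i: "i < n" and j: "j < n" and ij: "i \<noteq> j"
  shows "mono_mat n \<sigma> lam * transvection n i j f * mono_mat_inv n \<sigma> lam
    = transvection n (\<sigma> i) (\<sigma> j)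
        (fls_X_intpow (lam i) * f * fls_X_intpow (- lam j) :: 'a::field fls)"
proof (rule eq_matI)
  fix p q
  assume "p < dim_row (transvection n (\<sigma> i) (\<sigma> j) (fls_X_intpow (lam i) * f * fls_X_intpow (- lam j)))"
    and "q < dim_col (transvection n (\<sigma> i) (\<sigma> j) (fls_X_intpow (lam i) * f * fls_X_intpow (- lam j)))"
  then obtain k l where kl: "k < n" "l < n" "p = \<sigma> k" "q = \<sigma> l"
    using permutes_lessThan_obtain[OF \<sigma>] by (metis transvection_dim)
  have "fls_X_intpow (lam k) * fls_X_intpow (- lam k) = (1 :: 'a fls)"
    by (simp add: fls_X_intpow_times_conv_shift)
  then show "(mono_mat n \<sigma> lam * transvection n i j f * mono_mat_inv n \<sigma> lam) $$ (p, q)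
    = transvection n (\<sigma> i) (\<sigma> j) (fls_X_intpow (lam i) * f * fls_X_intpow (- lam j)) $$ (p, q)"
    unfolding kl(3,4) mono_mat_conj_index[OF \<sigma> transvection_carrier kl(1,2)]
    using ij kl(1,2) i j permutes_lessThan_in[OF \<sigma>]
    by (auto simp: transvection_index permutes_eq_iff[OF \<sigma>])
qed simp_all

lemma ev1_mat_transvection_monomial:
  assumes "a \<noteq> b"
  shows "ev1_mat (transvection n a b (fls_const t * fls_X_intpow e))
    = (transvection n a b t :: 'a::comm_ring_1 mat)"
  by (rule eq_matI)
    (use assms in \<open>auto simp: ev1_mat_def transvection_index ev1_monomial ev1_zero ev1_one\<close>)

lemma root_in_Phi_G_set:
  assumes \<sigma>: "\<sigma> permutes {0..<n}" and i: "i < n" and j: "j < n" and ij: "i \<noteq> j"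
    and gap: "lam i - lam j + of_bool (j < i) < of_bool (\<sigma> j < \<sigma> i)"
  shows "(\<sigma> i, \<sigma> j) \<in> Phi n (G_set n (mono_mat n \<sigma> lam :: 'a::field fls mat))"
proof -
  define a b where "a = \<sigma> i" and "b = \<sigma> j"
  have a: "a < n" and b: "b < n" and ab: "a \<noteq> b"
    using permutes_lessThan_in[OF \<sigma>] i j ij permutes_eq_iff[OF \<sigma>] by (auto simp: a_def b_def)
  \<comment> \<open>e is the largest exponent allowed at (a,b) in I^-; the gap makes the exponent m of the
    corresponding entry before conjugation respect the bound of I at (i,j).\<close>
  define e :: int where "e = - of_bool (a < b)"
  define m :: int where "m = e - lam i + lam j"
  have "of_bool (a < b) + of_bool (b < a) = (1 :: int)"
    using ab by (rule of_bool_less_add_of_bool_greater)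
  then have m: "of_bool (j < i) \<le> m"
    using gap unfolding m_def e_def a_def b_def by linarith
  have "root_subgroup n (a,b) \<subseteq> G_set n (mono_mat n \<sigma> lam :: 'a fls mat)"
  proof
    fix x :: "'a mat" assume "x \<in> root_subgroup n (a,b)"
    then obtain t where x: "x = transvection n a b t"
      by (auto simp: root_subgroup_eq_range_transvection)
    define M :: "'a fls mat" where "M = transvection n a b (fls_const t * fls_X_intpow e)"
    define g :: "'a fls mat" where "g = transvection n i j (fls_const t * fls_X_intpow m)"
    have "M \<in> Iwahori_minus n"
      unfolding M_def by (rule transvection_monomial_in_Iwahori_minus[OF ab b]) (simp add: e_def)
    moreover have "g \<in> Iwahori n"
      unfolding g_def by (rule transvection_monomial_in_Iwahori[OF ij j m])
    moreover have "mono_mat n \<sigma> lam * g * mat_inv n (mono_mat n \<sigma> lam) = M"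
      unfolding mat_inv_mono_mat[OF \<sigma>] g_def M_def a_def b_def
        mono_mat_conj_transvection[OF \<sigma> i j ij] fls_X_intpow_sandwich_monomial
      by (simp add: m_def)
    ultimately have "M \<in> S_set n (mono_mat n \<sigma> lam)"
      unfolding S_set_def conj_set_def by blast
    moreover have "ev1_mat M = x"
      unfolding M_def x by (rule ev1_mat_transvection_monomial[OF ab])
    ultimately show "x \<in> G_set n (mono_mat n \<sigma> lam)"
      unfolding G_set_def by blast
  qed
  moreover have "(a,b) \<in> roots n"
    using a b ab by (simp add: roots_def)
  ultimately show ?thesis
    unfolding Phi_def a_def b_def by simp
qed

lemma Phi_G_set_nonempty:
  assumes \<sigma>: "\<sigma> permutes {0..<n}" and not_bounds: "\<not> preserves_iwahori_bounds n \<sigma> lam"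
  shows "Phi n (G_set n (mono_mat n \<sigma> lam :: 'a::field fls mat)) \<noteq> {}"
proof -
  obtain i j where i: "i < n" and j: "j < n"
    and ne: "lam i - lam j + of_bool (j < i) \<noteq> of_bool (\<sigma> j < \<sigma> i)"
    using not_bounds unfolding preserves_iwahori_bounds_def by blast
  then have ij: "i \<noteq> j" by auto
  have "of_bool (i < j) + of_bool (j < i) = (1 :: int)"
    "of_bool (\<sigma> i < \<sigma> j) + of_bool (\<sigma> j < \<sigma> i) = (1 :: int)"
    using ij permutes_eq_iff[OF \<sigma>] by (simp_all add: of_bool_less_add_of_bool_greater)
  \<comment> \<open>the defects of (i,j) and (j,i) add up to zero\<close>
  then consider "lam i - lam j + of_bool (j < i) < of_bool (\<sigma> j < \<sigma> i)"
    | "lam j - lam i + of_bool (i < j) < of_bool (\<sigma> i < \<sigma> j)"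
    using ne by linarith
  then show ?thesis
    by cases
      (use root_in_Phi_G_set[OF \<sigma> i j ij] root_in_Phi_G_set[OF \<sigma> j i ij[symmetric]] in blast)+
qed

lemma Phi_torus: "Phi n (torus n :: 'a::field mat set) = {}"
proof -
  have "\<not> root_subgroup n (a,b) \<subseteq> (torus n :: 'a mat set)" if ab: "(a,b) \<in> roots n" for a b
  proof
    assume sub: "root_subgroup n (a,b) \<subseteq> (torus n :: 'a mat set)"
    have "transvection n a b (1 :: 'a) \<in> root_subgroup n (a,b)"
      unfolding root_subgroup_eq_range_transvection by (rule rangeI)
    then have "transvection n a b (1 :: 'a) \<in> torus n"
      using sub by (rule rev_subsetD)
    then have "transvection n a b (1 :: 'a) $$ (a,b) = 0"
      using ab unfolding torus_def diagonal_mat_def roots_def by simp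
    then show False
      using ab unfolding roots_def by (simp add: transvection_index)
  qed
  then show ?thesis
    unfolding Phi_def by auto
qed

lemma Iwahori_minus_Int_Iwahori_entry:
  assumes M: "M \<in> Iwahori_minus n \<inter> Iwahori n" and i: "i < n" and j: "j < n"
  shows "M $$ (i,j) = fls_const (fls_nth (M $$ (i,j)) 0)"
    and "i \<noteq> j \<Longrightarrow> M $$ (i,j) = 0"
proof -
  show const: "M $$ (i,j) = fls_const (fls_nth (M $$ (i,j)) 0)"
    using M i j by (intro power_series_poly_sinv_eq_const)
      (auto simp: Iwahori_minus_def Iwahori_def GLn_def entries_in_def)
  assume "i \<noteq> j"
  then have "fls_nth (M $$ (i,j)) 0 = 0"
    using M i j by (cases "i < j") (auto simp: Iwahori_minus_def Iwahori_def)
  then show "M $$ (i,j) = 0"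
    using const by simp
qed

lemma ev1_mat_in_torus:
  assumes M: "M \<in> Iwahori_minus n \<inter> Iwahori n"
  shows "ev1_mat M \<in> (torus n :: 'a::field mat set)"
proof -
  obtain B where Mc: "M \<in> carrier_mat n n" and B: "B \<in> carrier_mat n n" and MB: "M * B = 1\<^sub>m n"
    using M unfolding Iwahori_minus_def GLn_def by blast
  note const = Iwahori_minus_Int_Iwahori_entry(1)[OF M]
  note off_diag = Iwahori_minus_Int_Iwahori_entry(2)[OF M]
  define D where "D = mat_diag n (\<lambda>i. M $$ (i,i))"
  have "M = D"
    unfolding D_def using Mc off_diag by (intro eq_matI) (auto simp: mat_diag_def)
  then have "M * B = D * B" by simp
  also have "\<dots> = mat n n (\<lambda>(i,j). M $$ (i,i) * B $$ (i,j))"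
    unfolding D_def by (rule mat_diag_mult_left[OF B])
  finally have MB_mat: "M * B = mat n n (\<lambda>(i,j). M $$ (i,i) * B $$ (i,j))" .
  have diag: "M $$ (i,i) \<noteq> 0" if "i < n" for i
  proof -
    have "(M * B) $$ (i,i) = M $$ (i,i) * B $$ (i,i)"
      using that by (simp add: MB_mat)
    then show ?thesis using MB that by auto
  qed
  have ev1_entry: "ev1_mat M $$ (i,j) = fls_nth (M $$ (i,j)) 0" if "i < n" "j < n" for i j
  proof -
    have "ev1 (M $$ (i,j)) = ev1 (fls_const (fls_nth (M $$ (i,j)) 0))"
      using const[OF that] by (rule arg_cong)
    then show ?thesis using Mc that by (simp add: ev1_mat_def ev1_const)
  qed
  have "ev1_mat M \<in> carrier_mat n n"
    using Mc by (simp add: ev1_mat_def)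
  moreover have "diagonal_mat (ev1_mat M)"
    unfolding diagonal_mat_def using Mc off_diag ev1_entry by (simp add: ev1_mat_def ev1_zero)
  moreover have "ev1_mat M $$ (i,i) \<noteq> 0" if "i < n" for i
    using diag[OF that] const[OF that that] ev1_entry[OF that that] by fastforce
  ultimately show ?thesis
    unfolding torus_def by blast
qed

lemma mat_diag_const_in_Iwahori_minus_Int_Iwahori:
  assumes d: "\<forall>i<n. d i \<noteq> 0"
  shows "mat_diag n (\<lambda>i. fls_const (d i)) \<in> Iwahori_minus n \<inter> (Iwahori n :: 'a::field fls mat set)"
proof -
  let ?M = "mat_diag n (\<lambda>i. fls_const (d i)) :: 'a fls mat"
  let ?B = "mat_diag n (\<lambda>i. fls_const (inverse (d i))) :: 'a fls mat"
  have "mat_diag n (\<lambda>i. fls_const (d i) * fls_const (inverse (d i))) = (1\<^sub>m n :: 'a fls mat)"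
    "mat_diag n (\<lambda>i. fls_const (inverse (d i)) * fls_const (d i)) = (1\<^sub>m n :: 'a fls mat)"
    using d by (auto intro!: eq_matI simp: mat_diag_def fls_const_mult_const)
  then have inverse: "?M * ?B = 1\<^sub>m n" "?B * ?M = 1\<^sub>m n"
    by simp_all
  have GL: "?M \<in> GLn n P" if P: "\<And>c. P (fls_const c)" for P
  proof -
    have "entries_in n P ?M" "entries_in n P ?B"
      using P[of 0] P by (auto simp: entries_in_def mat_diag_def)
    then show ?thesis
      unfolding GLn_def using inverse mat_diag_dim by blast
  qed
  have "fls_nth (?M $$ (i,j)) 0 = 0" if "i < n" "j < n" "i \<noteq> j" for i j
    using that by (simp add: mat_diag_def)
  then show ?thesis
    using GL[of is_poly_sinv, OF is_poly_sinv_const]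
      GL[of is_power_series, OF is_power_series_const]
    unfolding Iwahori_minus_def Iwahori_def by auto
qed

lemma ev1_mat_Iwahori_minus_Int_Iwahori:
  "ev1_mat ` (Iwahori_minus n \<inter> Iwahori n) = (torus n :: 'a::field mat set)"
proof
  show "ev1_mat ` (Iwahori_minus n \<inter> Iwahori n) \<subseteq> (torus n :: 'a mat set)"
    using ev1_mat_in_torus by blast
next
  show "(torus n :: 'a mat set) \<subseteq> ev1_mat ` (Iwahori_minus n \<inter> Iwahori n)"
  proof
    fix A :: "'a mat" assume A: "A \<in> torus n"
    let ?M = "mat_diag n (\<lambda>i. fls_const (A $$ (i,i))) :: 'a fls mat"
    have "ev1_mat ?M = A"
      using A by (intro eq_matI)
        (auto simp: torus_def diagonal_mat_def ev1_mat_def mat_diag_def ev1_const ev1_zero)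
    moreover have "?M \<in> Iwahori_minus n \<inter> Iwahori n"
      using A unfolding torus_def by (intro mat_diag_const_in_Iwahori_minus_Int_Iwahori) simp
    ultimately show "A \<in> ev1_mat ` (Iwahori_minus n \<inter> Iwahori n)"
      by (rule image_eqI[OF sym])
  qed
qed

theorem lemma8p4:
  fixes n :: nat and w :: "'k::{field,finite} fls mat"
  assumes "w \<in> affW n"
  shows "(Phi n (G_set n w) = {} \<longleftrightarrow> w \<in> Omega n) \<and>
         (w \<in> Omega n \<longrightarrow> G_set n w = torus n)"
proof -
  obtain \<sigma> lam where w: "w = mono_mat n \<sigma> lam" and \<sigma>: "\<sigma> permutes {0..<n}"
    using assms unfolding affW_def by blast
  have G_torus: "G_set n w = torus n" if "w \<in> Omega n"
  proof -
    have "S_set n w = Iwahori_minus n \<inter> Iwahori n"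
      using that unfolding Omega_def S_set_def by simp
    then show ?thesis
      unfolding G_set_def by (simp only: ev1_mat_Iwahori_minus_Int_Iwahori)
  qed
  have "w \<in> Omega n" if "Phi n (G_set n w) = {}"
    using that Phi_G_set_nonempty[OF \<sigma>] conj_set_mono_mat_Iwahori[OF \<sigma>] assms
    unfolding w Omega_def by blast
  then show ?thesis
    using G_torus Phi_torus by metis
qed

end
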